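(* Let $\delta>0$ with $1/\delta\in\mathbb N$ and $\epsilon_{\mathrm{large}}>0$. Let $I_C$ be a set of items packed (stacked one on top of the other) inside a horizontal container $C\subseteq K=[0,N]^2$, each of placed width greater than $\epsilon_{\mathrm{large}}N$. Then there exist a set $I'_C\subseteq I_C$ with $|I'_C|\ge|I_C|-g(\delta,\epsilon_{\mathrm{large}})$, where $g$ depends only on $\delta$ and $\epsilon_{\mathrm{large}}$, and pairwise disjoint horizontal containers $C_1,\dots,C_{1/\delta}$, all lying inside $C$, which together pack all items of $I'_C$ (stacked inside each container), such that the total area inside $\bigcup_{j=1}^{1/\delta}C_j$ not occupied by any item is at most $\delta\cdot a(C)$, where $a(C)=w(C)h(C)$. (Symmetrically for vertical containers with items of placed height greater than $\epsilon_{\mathrm{large}}N$.)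
   Context: A container is an open axis-parallel rectangle $C\subseteq K$ with integer corner coordinates, labelled horizontal, vertical, or area; $w(C),h(C)$ denote its width and height. Items inside a horizontal container are stacked one on top of the other (their vertical projections are pairwise disjoint); items inside a vertical container are placed one next to the other (their horizontal projections are pairwise disjoint). *)

theory Defs
  imports Complex_Main
begin

text \<open>A rectangle is given by its integer corners (x1, y1, x2, y2); it denotes the
  open set (x1,x2) x (y1,y2) in the plane.\<close>
type_synonym rect = "int \<times> int \<times> int \<times> int"

definition rect_set :: "rect \<Rightarrow> (real \<times> real) set" where
  "rect_set r = (case r of (x1, y1, x2, y2) \<Rightarrow>
     {(x, y). real_of_int x1 < x \<and> x < real_of_int x2 \<and> real_of_int y1 < y \<and> y < real_of_int y2})"

definition valid_rect :: "rect \<Rightarrow> bool" where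
  "valid_rect r = (case r of (x1, y1, x2, y2) \<Rightarrow> x1 \<le> x2 \<and> y1 \<le> y2)"

definition rect_w :: "rect \<Rightarrow> int" where
  "rect_w r = (case r of (x1, y1, x2, y2) \<Rightarrow> x2 - x1)"

definition rect_h :: "rect \<Rightarrow> int" where
  "rect_h r = (case r of (x1, y1, x2, y2) \<Rightarrow> y2 - y1)"

definition rect_area :: "rect \<Rightarrow> int" where
  "rect_area r = rect_w r * rect_h r"

definition knapsack :: "nat \<Rightarrow> (real \<times> real) set" where
  "knapsack N = {0..real N} \<times> {0..real N}"

definition item_rect :: "(nat \<Rightarrow> nat) \<Rightarrow> (nat \<Rightarrow> nat) \<Rightarrow> (nat \<Rightarrow> int \<times> int) \<Rightarrow> nat \<Rightarrow> rect" where
  "item_rect wd ht p i = (fst (p i), snd (p i), fst (p i) + int (wd i), snd (p i) + int (ht i))"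

datatype ckind = Horizontal | Vertical

definition stack_proj :: "ckind \<Rightarrow> (nat \<Rightarrow> nat) \<Rightarrow> (nat \<Rightarrow> nat) \<Rightarrow> (nat \<Rightarrow> int \<times> int) \<Rightarrow> nat \<Rightarrow> real set" where
  "stack_proj k wd ht p i = (case k of
      Horizontal \<Rightarrow> {real_of_int (snd (p i)) <..< real_of_int (snd (p i)) + real (ht i)}
    | Vertical \<Rightarrow> {real_of_int (fst (p i)) <..< real_of_int (fst (p i)) + real (wd i)})"

definition packed_in :: "ckind \<Rightarrow> rect \<Rightarrow> (nat \<Rightarrow> nat) \<Rightarrow> (nat \<Rightarrow> nat) \<Rightarrow> (nat \<Rightarrow> int \<times> int) \<Rightarrow> nat set \<Rightarrow> bool" where
  "packed_in k C wd ht p I \<longleftrightarrow>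
     (\<forall>i\<in>I. rect_set (item_rect wd ht p i) \<subseteq> rect_set C) \<and>
     (\<forall>i\<in>I. \<forall>j\<in>I. i \<noteq> j \<longrightarrow> stack_proj k wd ht p i \<inter> stack_proj k wd ht p j = {})"

definition long_side :: "ckind \<Rightarrow> (nat \<Rightarrow> nat) \<Rightarrow> (nat \<Rightarrow> nat) \<Rightarrow> nat \<Rightarrow> nat" where
  "long_side k wd ht i = (case k of Horizontal \<Rightarrow> wd i | Vertical \<Rightarrow> ht i)"

end

theory Submission
  imports Defs "HOL-Library.Product_Lexorder"
begin

text \<open>Let m = 1/\<delta> and W = w(C). An item of width w gets the class j = \<lceil>w m / W\<rceil> and is
  widened to \<lfloor>j W / m\<rfloor>, which is less than w + W/m. The items of class j are stacked in a
  container of that width whose height is their total height, and the m containers are stacked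
  on top of each other inside C. Each item thus wastes less than W/m times its height, and the
  heights sum to at most h(C), so the waste is at most a(C)/m = \<delta> a(C). No item is discarded. Vertical
  containers are reduced to horizontal ones by transposition.\<close>

lemma rect_set_mono:
  assumes "x1' \<le> x1" "y1' \<le> y1" "x2 \<le> x2'" "y2 \<le> y2'"
  shows "rect_set (x1, y1, x2, y2) \<subseteq> rect_set (x1', y1', x2', y2')"
  using assms unfolding rect_set_def by auto

lemma rect_set_subset_iff:
  assumes "x1 < x2" "y1 < y2"
  shows "rect_set (x1, y1, x2, y2) \<subseteq> rect_set (x1', y1', x2', y2') \<longleftrightarrow>
    x1' \<le> x1 \<and> y1' \<le> y1 \<and> x2 \<le> x2' \<and> y2 \<le> y2'"
proof
  assume sub: "rect_set (x1, y1, x2, y2) \<subseteq> rect_set (x1', y1', x2', y2')"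
  have "real_of_int x1 + 1 \<le> x2" "real_of_int y1 + 1 \<le> y2"
    using assms by (simp_all add: of_int_add[symmetric] del: of_int_add)
  then have "(x1 + 1/2, y1 + 1/2) \<in> rect_set (x1, y1, x2, y2)"
    and "(x2 - 1/2, y2 - 1/2) \<in> rect_set (x1, y1, x2, y2)"
    unfolding rect_set_def by auto
  then have "(x1 + 1/2, y1 + 1/2) \<in> rect_set (x1', y1', x2', y2')"
    and "(x2 - 1/2, y2 - 1/2) \<in> rect_set (x1', y1', x2', y2')"
    using sub by blast+
  then have "real_of_int x1' < x1 + 1/2" "real_of_int y1' < y1 + 1/2"
    "real_of_int x2 - 1/2 < x2'" "real_of_int y2 - 1/2 < y2'"
    unfolding rect_set_def by auto
  then show "x1' \<le> x1 \<and> y1' \<le> y1 \<and> x2 \<le> x2' \<and> y2 \<le> y2'" by linarith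
qed (use rect_set_mono in blast)

lemma rect_set_disjoint_if_below:
  assumes "y2 \<le> y1'"
  shows "rect_set (x1, y1, x2, y2) \<inter> rect_set (x1', y1', x2', y2') = {}"
  using assms unfolding rect_set_def by auto

lemma rect_set_bands_disjoint:
  fixes B :: "nat \<Rightarrow> int"
  assumes "mono B" "j \<noteq> j'"
  shows "rect_set (x1, B j, x2, B (Suc j)) \<inter> rect_set (x1', B j', x2', B (Suc j')) = {}"
proof -
  from assms(2) consider "Suc j \<le> j'" | "Suc j' \<le> j" by linarith
  then show ?thesis
  proof cases
    case 1
    then show ?thesis using assms(1) by (intro rect_set_disjoint_if_below) (rule monoD)
  next
    case 2
    then show ?thesis using assms(1) by (subst Int_commute) (intro rect_set_disjoint_if_below, rule monoD)
  qed
qed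

lemma open_intervals_disjoint_iff:
  fixes s s' :: int
  assumes "0 < h" "0 < h'"
  shows "{real_of_int s <..< s + real h} \<inter> {real_of_int s' <..< s' + real h'} = {} \<longleftrightarrow>
    s + int h \<le> s' \<or> s' + int h' \<le> s"
proof
  assume disj: "{real_of_int s <..< s + real h} \<inter> {real_of_int s' <..< s' + real h'} = {}"
  show "s + int h \<le> s' \<or> s' + int h' \<le> s"
  proof (rule ccontr)
    assume "\<not> ?thesis"
    then have "real_of_int (max s s') + 1/2 \<in> {real_of_int s <..< s + real h} \<inter> {real_of_int s' <..< s' + real h'}"
      using assms by auto
    with disj show False by blast
  qed
qed auto

lemma sum_lengths_le_if_disjoint:
  fixes s :: "'a \<Rightarrow> int" and h :: "'a \<Rightarrow> nat"
  assumes "finite I" "lo \<le> hi"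
    and inside: "\<forall>i\<in>I. lo \<le> s i \<and> s i + int (h i) \<le> hi"
    and disj: "\<forall>i\<in>I. \<forall>j\<in>I. i \<noteq> j \<longrightarrow> s i + int (h i) \<le> s j \<or> s j + int (h j) \<le> s i"
  shows "int (\<Sum>i\<in>I. h i) \<le> hi - lo"
proof -
  have "(\<Sum>i\<in>I. h i) = (\<Sum>i\<in>I. card {s i ..< s i + int (h i)})" by simp
  also have "\<dots> = card (\<Union>i\<in>I. {s i ..< s i + int (h i)})"
    using assms(1) disj by (subst card_UN_disjoint) fastforce+
  also have "\<dots> \<le> card {lo ..< hi}"
    using inside by (intro card_mono) auto
  finally have "(\<Sum>i\<in>I. h i) \<le> nat (hi - lo)" by simp
  then show ?thesis using assms(2) by linarith
qed

lemma packed_in_Horizontal_iff: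
  assumes "\<forall>i\<in>I. 0 < wd i \<and> 0 < ht i"
  shows "packed_in Horizontal (x1, y1, x2, y2) wd ht p I \<longleftrightarrow>
    (\<forall>i\<in>I. x1 \<le> fst (p i) \<and> y1 \<le> snd (p i) \<and>
      fst (p i) + int (wd i) \<le> x2 \<and> snd (p i) + int (ht i) \<le> y2) \<and>
    (\<forall>i\<in>I. \<forall>j\<in>I. i \<noteq> j \<longrightarrow>
      snd (p i) + int (ht i) \<le> snd (p j) \<or> snd (p j) + int (ht j) \<le> snd (p i))"
proof -
  have inside: "rect_set (item_rect wd ht p i) \<subseteq> rect_set (x1, y1, x2, y2) \<longleftrightarrow>
      x1 \<le> fst (p i) \<and> y1 \<le> snd (p i) \<and> fst (p i) + int (wd i) \<le> x2 \<and> snd (p i) + int (ht i) \<le> y2"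
    if "i \<in> I" for i
    using assms that unfolding item_rect_def by (subst rect_set_subset_iff) auto
  have stacked: "stack_proj Horizontal wd ht p i \<inter> stack_proj Horizontal wd ht p j = {} \<longleftrightarrow>
      snd (p i) + int (ht i) \<le> snd (p j) \<or> snd (p j) + int (ht j) \<le> snd (p i)"
    if "i \<in> I" "j \<in> I" for i j
    using assms that unfolding stack_proj_def ckind.case by (intro open_intervals_disjoint_iff) auto
  show ?thesis unfolding packed_in_def using inside stacked by blast
qed

definition prefix_sum :: "'a set \<Rightarrow> ('a \<Rightarrow> 'b::linorder) \<Rightarrow> ('a \<Rightarrow> nat) \<Rightarrow> 'b \<Rightarrow> nat" where
  "prefix_sum I key h b = (\<Sum>i\<in>{i\<in>I. key i < b}. h i)"

lemma prefix_sum_le_prefix_sum: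
  assumes "finite I" and "\<And>i. i \<in> I \<Longrightarrow> key i < b \<Longrightarrow> key' i < b'"
  shows "prefix_sum I key h b \<le> prefix_sum I key' h b'"
  unfolding prefix_sum_def using assms by (intro sum_mono2) auto

lemma prefix_sum_add_le_prefix_sum:
  assumes "finite I" "i \<in> I" "\<not> key i < b" "key' i < b'"
    and "\<And>x. x \<in> I \<Longrightarrow> key x < b \<Longrightarrow> key' x < b'"
  shows "prefix_sum I key h b + h i \<le> prefix_sum I key' h b'"
proof -
  have "prefix_sum I key h b + h i = (\<Sum>x\<in>insert i {x\<in>I. key x < b}. h x)"
    using assms(1,3) unfolding prefix_sum_def by simp
  also have "\<dots> \<le> prefix_sum I key' h b'"
    unfolding prefix_sum_def using assms by (intro sum_mono2) auto
  finally show ?thesis .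
qed

lemma prefix_sum_le_sum: "finite I \<Longrightarrow> prefix_sum I key h b \<le> (\<Sum>i\<in>I. h i)"
  unfolding prefix_sum_def by (intro sum_mono2) auto

lemma prefix_sum_Suc:
  fixes key :: "'a \<Rightarrow> nat"
  assumes "finite I"
  shows "prefix_sum I key h (Suc j) = prefix_sum I key h j + (\<Sum>i\<in>{i\<in>I. key i = j}. h i)"
proof -
  have "{i\<in>I. key i < Suc j} = {i\<in>I. key i < j} \<union> {i\<in>I. key i = j}" by auto
  then show ?thesis unfolding prefix_sum_def using assms by (auto intro: sum.union_disjoint)
qed

lemma prefix_sum_lex_bounds:
  fixes a :: "'a::linorder \<Rightarrow> nat"
  assumes "finite I" "i \<in> I"
  shows "prefix_sum I a h (a i) \<le> prefix_sum I (\<lambda>i. (a i, i)) h (a i, i)"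
    and "prefix_sum I (\<lambda>i. (a i, i)) h (a i, i) + h i \<le> prefix_sum I a h (Suc (a i))"
proof -
  show "prefix_sum I a h (a i) \<le> prefix_sum I (\<lambda>i. (a i, i)) h (a i, i)"
    using assms(1) by (rule prefix_sum_le_prefix_sum) simp
  show "prefix_sum I (\<lambda>i. (a i, i)) h (a i, i) + h i \<le> prefix_sum I a h (Suc (a i))"
    using assms by (rule prefix_sum_add_le_prefix_sum) auto
qed

lemma prefix_sum_stacked:
  assumes "finite I" "i \<in> I" "i' \<in> I" "key i \<noteq> key i'"
  shows "prefix_sum I key h (key i) + h i \<le> prefix_sum I key h (key i') \<or>
    prefix_sum I key h (key i') + h i' \<le> prefix_sum I key h (key i)"
proof -
  have "prefix_sum I key h (key x) + h x \<le> prefix_sum I key h (key x')"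
    if "x \<in> I" "key x < key x'" for x x'
    using assms(1) that(1) by (rule prefix_sum_add_le_prefix_sum) (use that(2) in auto)
  then show ?thesis using assms(2,3) linorder_neqE[OF assms(4)] by blast
qed

lemma sum_weighted_by_class:
  fixes f :: "'b \<Rightarrow> 'c::comm_semiring_1"
  assumes "finite I" "finite J" "a ` I \<subseteq> J"
  shows "(\<Sum>j\<in>J. f j * of_nat (\<Sum>i\<in>{i\<in>I. a i = j}. h i)) = (\<Sum>i\<in>I. f (a i) * of_nat (h i))"
proof -
  have "(\<Sum>j\<in>J. f j * of_nat (\<Sum>i\<in>{i\<in>I. a i = j}. h i)) =
      (\<Sum>j\<in>J. \<Sum>i\<in>{i\<in>I. a i = j}. f (a i) * of_nat (h i))"
    by (simp add: sum_distrib_left)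
  also have "\<dots> = (\<Sum>i\<in>I. f (a i) * of_nat (h i))"
    using assms by (rule sum.group)
  finally show ?thesis .
qed

lemma stacked_class_containers_exist:
  fixes a :: "nat \<Rightarrow> nat" and f :: "nat \<Rightarrow> int"
  assumes fin: "finite I" and pos: "\<forall>i\<in>I. 0 < wd i \<and> 0 < ht i"
    and cls: "\<forall>i\<in>I. a i \<in> {1..m} \<and> int (wd i) \<le> f (a i)"
    and f: "\<forall>j\<in>{1..m}. 0 \<le> f j \<and> f j \<le> x2 - x1"
    and hts: "int (\<Sum>i\<in>I. ht i) \<le> y2 - y1"
  shows "\<exists>Cs p'.
    (\<forall>j\<in>{1..m}. valid_rect (Cs j) \<and> rect_set (Cs j) \<subseteq> rect_set (x1, y1, x2, y2)) \<and>
    (\<forall>j\<in>{1..m}. \<forall>j'\<in>{1..m}. j \<noteq> j' \<longrightarrow> rect_set (Cs j) \<inter> rect_set (Cs j') = {}) \<and>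
    (\<forall>j\<in>{1..m}. packed_in Horizontal (Cs j) wd ht p' {i\<in>I. a i = j}) \<and>
    (\<Sum>j\<in>{1..m}. rect_area (Cs j)) = (\<Sum>i\<in>I. f (a i) * int (ht i))"
proof -
  define B where "B j = y1 + int (prefix_sum I a ht j)" for j
  \<comment> \<open>Ordering the items by (class, index) makes every class a contiguous block.\<close>
  define Y where "Y i = y1 + int (prefix_sum I (\<lambda>i. (a i, i)) ht (a i, i))" for i
  define Cs where "Cs j = (x1, B j, x1 + f j, B (Suc j))" for j
  define p' where "p' i = (x1, Y i)" for i
  have B_mono: "mono B"
  proof
    fix j j' :: nat assume "j \<le> j'"
    then have "prefix_sum I a ht j \<le> prefix_sum I a ht j'"
      using fin by (intro prefix_sum_le_prefix_sum) auto
    then show "B j \<le> B j'" unfolding B_def by simp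
  qed
  have B_bounds: "y1 \<le> B j \<and> B j \<le> y2" for j
    using prefix_sum_le_sum[OF fin, of a ht j] hts unfolding B_def by linarith
  have item_in_group: "B (a i) \<le> Y i \<and> Y i + int (ht i) \<le> B (Suc (a i))" if "i \<in> I" for i
    using prefix_sum_lex_bounds[OF fin that, where a = a and h = ht] unfolding B_def Y_def by simp
  have items_stacked: "Y i + int (ht i) \<le> Y i' \<or> Y i' + int (ht i') \<le> Y i"
    if "i \<in> I" "i' \<in> I" "i \<noteq> i'" for i i'
  proof -
    have "(a i, i) \<noteq> (a i', i')" using that(3) by simp
    from prefix_sum_stacked[where key = "\<lambda>i. (a i, i)", OF fin that(1,2) this, where h = ht]
    show ?thesis unfolding Y_def by linarith
  qed
  have area: "rect_area (Cs j) = f j * int (\<Sum>i\<in>{i\<in>I. a i = j}. ht i)" for j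
    unfolding Cs_def B_def rect_area_def rect_w_def rect_h_def using prefix_sum_Suc[OF fin] by simp
  show ?thesis
  proof (intro exI conjI ballI impI)
    fix j assume "j \<in> {1..m}"
    then have "0 \<le> f j" "f j \<le> x2 - x1" using f by auto
    then show "valid_rect (Cs j)" "rect_set (Cs j) \<subseteq> rect_set (x1, y1, x2, y2)"
      using monoD[OF B_mono, of j "Suc j"] B_bounds[of j] B_bounds[of "Suc j"]
      unfolding Cs_def valid_rect_def by (simp, intro rect_set_mono) auto
    show "packed_in Horizontal (Cs j) wd ht p' {i\<in>I. a i = j}"
      unfolding Cs_def
    proof (rule packed_in_Horizontal_iff[THEN iffD2, OF _ conjI])
      show "\<forall>i\<in>{i\<in>I. a i = j}. 0 < wd i \<and> 0 < ht i" using pos by auto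
      show "\<forall>i\<in>{i\<in>I. a i = j}. x1 \<le> fst (p' i) \<and> B j \<le> snd (p' i) \<and>
          fst (p' i) + int (wd i) \<le> x1 + f j \<and> snd (p' i) + int (ht i) \<le> B (Suc j)"
        using cls item_in_group by (auto simp: p'_def)
      show "\<forall>i\<in>{i\<in>I. a i = j}. \<forall>i'\<in>{i\<in>I. a i = j}. i \<noteq> i' \<longrightarrow>
          snd (p' i) + int (ht i) \<le> snd (p' i') \<or> snd (p' i') + int (ht i') \<le> snd (p' i)"
        using items_stacked by (auto simp: p'_def)
    qed
  next
    fix j j' :: nat assume "j \<noteq> j'"
    then show "rect_set (Cs j) \<inter> rect_set (Cs j') = {}"
      unfolding Cs_def using B_mono by (intro rect_set_bands_disjoint)
  next
    show "(\<Sum>j\<in>{1..m}. rect_area (Cs j)) = (\<Sum>i\<in>I. f (a i) * int (ht i))"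
      unfolding area using cls by (intro sum_weighted_by_class[OF fin]) auto
  qed
qed

lemma rounded_width_classes_exist:
  fixes W :: int
  assumes m: "1 \<le> m" and W: "0 \<le> W" and wd: "\<forall>i\<in>I. 0 < wd i \<and> int (wd i) \<le> W"
  shows "\<exists>a f. (\<forall>i\<in>I. a i \<in> {1..m} \<and> int (wd i) \<le> f (a i) \<and>
      real_of_int (f (a i)) - real (wd i) \<le> real_of_int W / real m) \<and>
    (\<forall>j\<in>{1..m}. 0 \<le> f j \<and> f j \<le> W)"
proof -
  define a where "a i = nat \<lceil>real (wd i) * real m / real_of_int W\<rceil>" for i
  define f where "f j = \<lfloor>real j * real_of_int W / real m\<rfloor>" for j
  have "f j \<le> W" if "j \<le> m" for j
  proof -
    have "real j * real_of_int W \<le> real m * real_of_int W"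
      using that W by (intro mult_right_mono) simp_all
    then show ?thesis using m unfolding f_def by (simp add: floor_le_iff field_simps)
  qed
  moreover have "0 \<le> f j" for j using W unfolding f_def by simp
  moreover have "a i \<in> {1..m} \<and> int (wd i) \<le> f (a i) \<and>
      real_of_int (f (a i)) - real (wd i) \<le> real_of_int W / real m" if "i \<in> I" for i
  proof -
    define x where "x = real (wd i) * real m / real_of_int W"
    have W_pos: "0 < real_of_int W" using wd that by force
    have x: "0 < x" "x \<le> real m"
      using wd that W_pos m unfolding x_def by (auto simp: field_simps)
    have "a i = nat \<lceil>x\<rceil>" unfolding a_def x_def ..
    then have a_i: "a i \<in> {1..m}" "real (a i) = real_of_int \<lceil>x\<rceil>"
      using x by (auto simp: le_nat_iff nat_le_iff ceiling_le_iff)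
    have wd_x: "real (wd i) = x * real_of_int W / real m" using W_pos m unfolding x_def by simp
    have "real (wd i) \<le> real (a i) * real_of_int W / real m"
      unfolding wd_x a_i(2) using W_pos m by (intro divide_right_mono mult_right_mono) simp_all
    then have fits: "int (wd i) \<le> f (a i)" unfolding f_def by (simp add: le_floor_iff)
    have ceiling_x: "real_of_int \<lceil>x\<rceil> < x + 1" using ceiling_correct[of x] by linarith
    have "real_of_int (f (a i)) \<le> real (a i) * real_of_int W / real m"
      unfolding f_def by (rule of_int_floor_le)
    also have "\<dots> < (x + 1) * real_of_int W / real m"
      unfolding a_i(2) using W_pos m ceiling_x
      by (intro divide_strict_right_mono mult_strict_right_mono) simp_all
    also have "\<dots> = real (wd i) + real_of_int W / real m"
      unfolding wd_x by (simp add: distrib_right add_divide_distrib)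
    finally have "real_of_int (f (a i)) < real (wd i) + real_of_int W / real m" .
    with fits a_i(1) show ?thesis by simp
  qed
  ultimately show ?thesis by (intro exI[of _ a] exI[of _ f]) auto
qed

definition repacking :: "ckind \<Rightarrow> rect \<Rightarrow> nat \<Rightarrow> (nat \<Rightarrow> nat) \<Rightarrow> (nat \<Rightarrow> nat) \<Rightarrow> nat set \<Rightarrow>
    (nat \<Rightarrow> rect) \<Rightarrow> (nat \<Rightarrow> nat) \<Rightarrow> (nat \<Rightarrow> int \<times> int) \<Rightarrow> bool" where
  "repacking k C m wd ht I Cs a p \<longleftrightarrow>
    (\<forall>j\<in>{1..m}. valid_rect (Cs j) \<and> rect_set (Cs j) \<subseteq> rect_set C) \<and>
    (\<forall>j\<in>{1..m}. \<forall>j'\<in>{1..m}. j \<noteq> j' \<longrightarrow> rect_set (Cs j) \<inter> rect_set (Cs j') = {}) \<and>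
    (\<forall>i\<in>I. a i \<in> {1..m}) \<and>
    (\<forall>j\<in>{1..m}. packed_in k (Cs j) wd ht p {i\<in>I. a i = j}) \<and>
    real_of_int (\<Sum>j\<in>{1..m}. rect_area (Cs j)) - real (\<Sum>i\<in>I. wd i * ht i)
      \<le> real_of_int (rect_area C) / real m"

lemma repacking_Horizontal_exists:
  assumes m: "1 \<le> m" and fin: "finite I" and C: "valid_rect C"
    and pos: "\<forall>i\<in>I. 0 < wd i \<and> 0 < ht i" and packed: "packed_in Horizontal C wd ht p I"
  shows "\<exists>Cs a p'. repacking Horizontal C m wd ht I Cs a p'"
proof -
  obtain x1 y1 x2 y2 where C_eq: "C = (x1, y1, x2, y2)" by (cases C)
  have xy: "x1 \<le> x2" "y1 \<le> y2" using C unfolding C_eq valid_rect_def by simp_all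
  note items = packed[unfolded C_eq packed_in_Horizontal_iff[OF pos]]
  have hts: "int (\<Sum>i\<in>I. ht i) \<le> y2 - y1"
    by (rule sum_lengths_le_if_disjoint[OF fin xy(2), where s = "\<lambda>i. snd (p i)"]) (use items in blast)+
  then have hts_real: "real (\<Sum>i\<in>I. ht i) \<le> real_of_int (y2 - y1)"
    by (metis of_int_le_iff of_int_of_nat_eq)
  obtain a f where af: "\<forall>i\<in>I. a i \<in> {1..m} \<and> int (wd i) \<le> f (a i) \<and>
        real_of_int (f (a i)) - real (wd i) \<le> real_of_int (x2 - x1) / real m"
      and f: "\<forall>j\<in>{1..m}. 0 \<le> f j \<and> f j \<le> x2 - x1"
    using rounded_width_classes_exist[OF m, of "x2 - x1" I wd] xy items pos by force
  obtain Cs p' where Cs: "(\<forall>j\<in>{1..m}. valid_rect (Cs j) \<and> rect_set (Cs j) \<subseteq> rect_set C) \<and>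
      (\<forall>j\<in>{1..m}. \<forall>j'\<in>{1..m}. j \<noteq> j' \<longrightarrow> rect_set (Cs j) \<inter> rect_set (Cs j') = {}) \<and>
      (\<forall>j\<in>{1..m}. packed_in Horizontal (Cs j) wd ht p' {i\<in>I. a i = j})"
    and area: "(\<Sum>j\<in>{1..m}. rect_area (Cs j)) = (\<Sum>i\<in>I. f (a i) * int (ht i))"
    using stacked_class_containers_exist[OF fin pos _ f hts, of a] af unfolding C_eq by blast
  have "real_of_int (\<Sum>j\<in>{1..m}. rect_area (Cs j)) - real (\<Sum>i\<in>I. wd i * ht i)
      = (\<Sum>i\<in>I. (real_of_int (f (a i)) - real (wd i)) * real (ht i))"
    unfolding area by (simp add: sum_subtractf left_diff_distrib)
  also have "\<dots> \<le> (\<Sum>i\<in>I. real_of_int (x2 - x1) / real m * real (ht i))"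
    using af by (intro sum_mono mult_right_mono) auto
  also have "\<dots> = real_of_int (x2 - x1) / real m * real (\<Sum>i\<in>I. ht i)"
    by (simp add: sum_distrib_left)
  also have "\<dots> \<le> real_of_int (x2 - x1) / real m * real_of_int (y2 - y1)"
    using hts_real xy by (intro mult_left_mono) simp_all
  also have "\<dots> = real_of_int (rect_area C) / real m"
    unfolding C_eq rect_area_def rect_w_def rect_h_def by simp
  finally show ?thesis unfolding repacking_def using Cs af by blast
qed

definition rect_transpose :: "rect \<Rightarrow> rect" where
  "rect_transpose r = (case r of (x1, y1, x2, y2) \<Rightarrow> (y1, x1, y2, x2))"

lemma rect_set_transpose: "rect_set (rect_transpose r) = prod.swap ` rect_set r"
  by (cases r) (auto simp: rect_transpose_def rect_set_def image_iff)

lemma rect_transpose_transpose [simp]: "rect_transpose (rect_transpose r) = r"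
  by (cases r) (simp add: rect_transpose_def)

lemma valid_rect_transpose [simp]: "valid_rect (rect_transpose r) = valid_rect r"
  by (cases r) (auto simp: rect_transpose_def valid_rect_def)

lemma rect_area_transpose [simp]: "rect_area (rect_transpose r) = rect_area r"
  by (cases r) (simp add: rect_transpose_def rect_area_def rect_w_def rect_h_def)

lemma rect_set_transpose_subset_iff [simp]:
  "rect_set (rect_transpose r) \<subseteq> rect_set (rect_transpose s) \<longleftrightarrow> rect_set r \<subseteq> rect_set s"
  unfolding rect_set_transpose by (simp add: inj_image_subset_iff)

lemma rect_set_transpose_disjoint_iff [simp]:
  "rect_set (rect_transpose r) \<inter> rect_set (rect_transpose s) = {} \<longleftrightarrow> rect_set r \<inter> rect_set s = {}"
  unfolding rect_set_transpose by (metis image_Int image_is_empty inj_swap)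

lemma packed_in_Vertical_iff_transpose:
  "packed_in Vertical C wd ht p I \<longleftrightarrow>
    packed_in Horizontal (rect_transpose C) ht wd (prod.swap \<circ> p) I"
proof -
  have "item_rect ht wd (prod.swap \<circ> p) i = rect_transpose (item_rect wd ht p i)" for i
    by (simp add: item_rect_def rect_transpose_def)
  moreover have "stack_proj Horizontal ht wd (prod.swap \<circ> p) i = stack_proj Vertical wd ht p i" for i
    by (simp add: stack_proj_def)
  ultimately show ?thesis
    using rect_set_transpose_subset_iff[of _ "rect_transpose C"] unfolding packed_in_def by simp
qed

lemma repacking_Vertical_if_transpose:
  assumes "repacking Horizontal (rect_transpose C) m ht wd I Cs a p"
  shows "repacking Vertical C m wd ht I (rect_transpose \<circ> Cs) a (prod.swap \<circ> p)"
proof -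
  have "prod.swap \<circ> (prod.swap \<circ> p) = p" by (simp add: fun_eq_iff)
  then have "packed_in Vertical (rect_transpose (Cs j)) wd ht (prod.swap \<circ> p) X \<longleftrightarrow>
      packed_in Horizontal (Cs j) ht wd p X" for j X
    by (simp add: packed_in_Vertical_iff_transpose)
  moreover have "rect_set (rect_transpose (Cs j)) \<subseteq> rect_set C \<longleftrightarrow> rect_set (Cs j) \<subseteq> rect_set (rect_transpose C)" for j
    using rect_set_transpose_subset_iff[of "Cs j" "rect_transpose C"] by simp
  ultimately show ?thesis
    using assms unfolding repacking_def by (simp add: mult.commute)
qed

lemma repacking_exists:
  assumes "1 \<le> m" "finite I" "valid_rect C"
    and pos: "\<forall>i\<in>I. 0 < wd i \<and> 0 < ht i" and packed: "packed_in k C wd ht p I"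
  shows "\<exists>Cs a p'. repacking k C m wd ht I Cs a p'"
proof (cases k)
  case Horizontal
  then show ?thesis using repacking_Horizontal_exists[OF assms(1-3) pos] packed by simp
next
  case Vertical
  have "\<forall>i\<in>I. 0 < ht i \<and> 0 < wd i" using pos by auto
  moreover have "packed_in Horizontal (rect_transpose C) ht wd (prod.swap \<circ> p) I"
    using packed Vertical by (simp add: packed_in_Vertical_iff_transpose)
  ultimately obtain Cs a p' where "repacking Horizontal (rect_transpose C) m ht wd I Cs a p'"
    using repacking_Horizontal_exists[OF assms(1,2)] assms(3) by (metis valid_rect_transpose)
  then show ?thesis using Vertical repacking_Vertical_if_transpose by blast
qed

lemma unit_fraction_cases:
  fixes \<delta> :: real
  assumes "0 < \<delta>" "1 / \<delta> \<in> \<nat>"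
  obtains n where "1 \<le> n" "nat \<lfloor>1 / \<delta>\<rfloor> = n" "\<delta> = 1 / real n"
proof -
  from assms(2) obtain n where n: "1 / \<delta> = real n" by (rule Nats_cases)
  have "\<delta> = 1 / (1 / \<delta>)" by simp
  then have "\<delta> = 1 / real n" unfolding n .
  moreover have "0 < 1 / \<delta>" using assms(1) by simp
  ultimately show ?thesis using n that by simp
qed

theorem mainTheorem13:
  shows "\<exists>g :: real \<Rightarrow> real \<Rightarrow> nat. \<forall>(\<delta>::real) (\<epsilon>::real).
    \<delta> > 0 \<longrightarrow> 1 / \<delta> \<in> \<nat> \<longrightarrow> \<epsilon> > 0 \<longrightarrow>
    (\<forall>(k::ckind) (N::nat) (C::rect) (wd::nat \<Rightarrow> nat) (ht::nat \<Rightarrow> nat) (p::nat \<Rightarrow> int \<times> int) (I::nat set).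
       finite I \<and> valid_rect C \<and> rect_set C \<subseteq> knapsack N \<and>
       (\<forall>i\<in>I. wd i > 0 \<and> ht i > 0) \<and>
       packed_in k C wd ht p I \<and>
       (\<forall>i\<in>I. real (long_side k wd ht i) > \<epsilon> * real N)
     \<longrightarrow>
       (\<exists>(I'::nat set) (Cs::nat \<Rightarrow> rect) (a::nat \<Rightarrow> nat) (p'::nat \<Rightarrow> int \<times> int).
          I' \<subseteq> I \<and> card I' + g \<delta> \<epsilon> \<ge> card I \<and>
          (\<forall>j\<in>{1..nat \<lfloor>1 / \<delta>\<rfloor>}. valid_rect (Cs j) \<and> rect_set (Cs j) \<subseteq> rect_set C) \<and>
          (\<forall>j\<in>{1..nat \<lfloor>1 / \<delta>\<rfloor>}. \<forall>j'\<in>{1..nat \<lfloor>1 / \<delta>\<rfloor>}. j \<noteq> j' \<longrightarrow>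
              rect_set (Cs j) \<inter> rect_set (Cs j') = {}) \<and>
          (\<forall>i\<in>I'. a i \<in> {1..nat \<lfloor>1 / \<delta>\<rfloor>}) \<and>
          (\<forall>j\<in>{1..nat \<lfloor>1 / \<delta>\<rfloor>}. packed_in k (Cs j) wd ht p' {i\<in>I'. a i = j}) \<and>
          real_of_int (\<Sum>j\<in>{1..nat \<lfloor>1 / \<delta>\<rfloor>}. rect_area (Cs j)) - real (\<Sum>i\<in>I'. wd i * ht i)
            \<le> \<delta> * real_of_int (rect_area C)))"
  apply (intro exI[of _ "\<lambda>_ _. 0"] allI impI)
  apply (elim conjE)
  subgoal premises prems for \<delta> \<epsilon> k N C wd ht p I
  proof -
    obtain n where n: "1 \<le> n" "nat \<lfloor>1 / \<delta>\<rfloor> = n" "\<delta> = 1 / real n"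
      using prems(1,2) by (rule unit_fraction_cases)
    obtain Cs a p' where "repacking k C n wd ht I Cs a p'"
      using repacking_exists[OF n(1) prems(4,5,7,8)] by blast
    then show ?thesis
      unfolding repacking_def n(2)
      by (intro exI[of _ I] exI[of _ Cs] exI[of _ a] exI[of _ p']) (simp add: n(3))
  qed
  done

end
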